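(* Let $\mu\ge 2$ be an integer and consider a Markov chain $(X_t)_{t\ge0}$ on $\{1,2,\dots,\mu\}$ with transition probabilities $\Pr[X_{t+1}=X_t+1\mid X_t]=X_t(\mu-X_t)/\mu^2$ for $1\le X_t<\mu$, $\Pr[X_{t+1}=X_t-1\mid X_t]=X_t(\mu-X_t)/\mu^2$ for $1<X_t<\mu$, and $X_{t+1}=X_t$ with the remaining probability. Let $T$ be the first hitting time of state $\mu$. Then for all starting states $X_0$, \[ \frac12(\mu-X_0)\mu\ln(\mu-1)\le \mathrm{E}[T\mid X_0]\le 4(\mu-X_0)\mu H_{\lfloor\mu/2\rfloor}\le 4\mu^2\ln\mu. \] In addition, if $n$ is a positive integer with $\mu\le n$, then $\Pr[T\ge 8\mu^2\log^3 n]\le n^{-\log n}$.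
   Context: $H_m=\sum_{k=1}^m 1/k$ denotes the $m$-th harmonic number; $\ln$ is the natural logarithm and $\log$ the binary logarithm. *)

theory Defs
  imports "HOL-Probability.Probability"
begin

text \<open>Canonical construction of the Markov chain on \<open>{1..\<mu>}\<close>: at every step an
  independent innovation \<open>u\<close>, uniform on \<open>{0..<\<mu>^2}\<close>, is drawn.\<close>

definition chain_step :: "nat \<Rightarrow> nat \<Rightarrow> nat \<Rightarrow> nat" where
  "chain_step \<mu> x u =
     (if 1 \<le> x \<and> x < \<mu> \<and> u < x * (\<mu> - x) then x + 1
      else if 1 < x \<and> x < \<mu> \<and> u < 2 * x * (\<mu> - x) then x - 1
      else x)"

definition innov_space :: "nat \<Rightarrow> nat stream measure" where
  "innov_space \<mu> = stream_space (measure_pmf (pmf_of_set {0..<\<mu>^2}))"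

fun chain :: "nat \<Rightarrow> nat \<Rightarrow> nat stream \<Rightarrow> nat \<Rightarrow> nat" where
  "chain \<mu> x0 \<omega> 0 = x0"
| "chain \<mu> x0 \<omega> (Suc t) = chain_step \<mu> (chain \<mu> x0 \<omega> t) (\<omega> !! t)"

definition hit_time :: "nat \<Rightarrow> nat \<Rightarrow> nat stream \<Rightarrow> enat" where
  "hit_time \<mu> x0 \<omega> =
     (if \<exists>t. chain \<mu> x0 \<omega> t = \<mu> then enat (LEAST t. chain \<mu> x0 \<omega> t = \<mu>) else \<infinity>)"

end

theory Submission
  imports Defs
begin

text \<open>By first-step analysis the expected hitting time \<open>E\<close> satisfies
  \<open>\<mu>^2 E(x) = \<mu>^2 + \<Sum>u. E(step x u)\<close> for \<open>1 \<le> x < \<mu>\<close>. For the increments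
  \<open>d(x) = E(x) - E(x+1)\<close> this reads \<open>x(\<mu>-x) d(x) = \<mu>^2 + [x > 1] x(\<mu>-x) d(x-1)\<close>, which forces
  \<open>d(x) = \<mu> (H(x) + H(\<mu>-1) - H(\<mu>-1-x))\<close>. Summing the increments gives \<open>E\<close> in closed form,
  and the three bounds on \<open>E\<close> are elementary estimates of harmonic numbers. Rearranging the
  equation needs \<open>E\<close> finite, which follows from the closed form itself: it bounds the
  expectations of the truncated hitting times, by induction on the truncation level.

  For the tail, Markov's inequality gives \<open>Pr[T \<ge> s] \<le> 1/2\<close> from every start once
  \<open>s \<ge> 2 \<mu>^2 H(\<mu>-1)\<close>, and restarting the chain after each block of \<open>s\<close> steps makes the tail
  submultiplicative: \<open>Pr[T \<ge> m s] \<le> 2^-m\<close>. Take \<open>m = \<lceil>log^2 n\<rceil>\<close>.\<close>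

section \<open>The chain and its hitting time\<close>

lemma chain_Cons_Suc: "chain \<mu> x (u ## \<omega>) (Suc t) = chain \<mu> (chain_step \<mu> x u) \<omega> t"
  by (induction t) (auto simp: Stream_snth)

lemma chain_step_bounds:
  assumes "1 \<le> x" "x \<le> \<mu>"
  shows "1 \<le> chain_step \<mu> x u" "chain_step \<mu> x u \<le> \<mu>"
  using assms by (auto simp: chain_step_def)

lemma hit_time_top [simp]: "hit_time \<mu> \<mu> \<omega> = 0"
  unfolding hit_time_def by (auto simp: zero_enat_def intro!: Least_equality exI[of _ 0])

lemma hit_time_Cons:
  assumes "x \<noteq> \<mu>"
  shows "hit_time \<mu> x (u ## \<omega>) = eSuc (hit_time \<mu> (chain_step \<mu> x u) \<omega>)"
proof -
  let ?y = "chain_step \<mu> x u"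
  have hits_iff: "(\<exists>t. chain \<mu> x (u ## \<omega>) t = \<mu>) \<longleftrightarrow> (\<exists>t. chain \<mu> ?y \<omega> t = \<mu>)"
    using assms by (metis chain.simps(1) chain_Cons_Suc not0_implies_Suc)
  show ?thesis
  proof (cases "\<exists>t. chain \<mu> ?y \<omega> t = \<mu>")
    case True
    then obtain t where "chain \<mu> ?y \<omega> t = \<mu>" by blast
    then have "(LEAST t. chain \<mu> x (u ## \<omega>) t = \<mu>) = Suc (LEAST t. chain \<mu> ?y \<omega> t = \<mu>)"
      using assms
      by (intro Least_Suc2[where n = "Suc t"]) (auto simp del: chain.simps(2) simp: chain_Cons_Suc)
    then show ?thesis
      using True hits_iff unfolding hit_time_def by (simp add: eSuc_enat)
  qed (use hits_iff in \<open>simp add: hit_time_def\<close>)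
qed

lemma measurable_chain [measurable]:
  "(\<lambda>\<omega>. chain \<mu> x \<omega> t) \<in> stream_space (measure_pmf p) \<rightarrow>\<^sub>M count_space UNIV"
proof (induction t)
  case (Suc t)
  have "(\<lambda>\<omega>. chain_step \<mu> (chain \<mu> x \<omega> t) (\<omega> !! t)) \<in> stream_space (measure_pmf p) \<rightarrow>\<^sub>M count_space UNIV"
    by (rule measurable_compose_countable'[where I = UNIV, OF _ Suc.IH])
       (auto intro: measurable_compose[OF measurable_snth])
  then show ?case by simp
qed simp

lemma measurable_hit_time [measurable]:
  "hit_time \<mu> x \<in> stream_space (measure_pmf p) \<rightarrow>\<^sub>M count_space UNIV"
  unfolding hit_time_def by measurable

lemma measurable_hit_time_innov_space [measurable]:
  "hit_time \<mu> x \<in> innov_space \<mu> \<rightarrow>\<^sub>M count_space UNIV"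
  unfolding innov_space_def by measurable

lemma prob_space_innov_space: "prob_space (innov_space \<mu>)"
  unfolding innov_space_def by (rule prob_space.prob_space_stream_space[OF prob_space_measure_pmf])

lemma space_innov_space: "space (innov_space \<mu>) = UNIV"
  by (simp add: innov_space_def space_stream_space)

lemma nn_integral_stream_space_pmf_of_set:
  fixes A :: "'a set"
  defines "S \<equiv> stream_space (measure_pmf (pmf_of_set A))"
  assumes A: "finite A" "A \<noteq> {}" and f: "f \<in> borel_measurable S"
  shows "of_nat (card A) * (\<integral>\<^sup>+\<omega>. f \<omega> \<partial>S) = (\<Sum>u\<in>A. \<integral>\<^sup>+\<omega>. f (u ## \<omega>) \<partial>S)"
proof -
  have "(\<integral>\<^sup>+\<omega>. f \<omega> \<partial>S) = (\<integral>\<^sup>+u. (\<integral>\<^sup>+\<omega>. f (u ## \<omega>) \<partial>S) \<partial>measure_pmf (pmf_of_set A))"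
    unfolding S_def by (rule prob_space.nn_integral_stream_space[OF prob_space_measure_pmf f[unfolded S_def]])
  also have "\<dots> = (\<Sum>u\<in>A. \<integral>\<^sup>+\<omega>. f (u ## \<omega>) \<partial>S) / of_nat (card A)"
    by (rule nn_integral_pmf_of_set[OF A(2,1)])
  finally have "(\<integral>\<^sup>+\<omega>. f \<omega> \<partial>S) = (\<Sum>u\<in>A. \<integral>\<^sup>+\<omega>. f (u ## \<omega>) \<partial>S) / of_nat (card A)" .
  moreover have "of_nat (card A) \<noteq> (0::ennreal)" "of_nat (card A) \<noteq> (top::ennreal)"
    using A by (simp_all add: ennreal_of_nat_neq_top)
  ultimately show ?thesis
    by (metis mult_divide_eq_ennreal ennreal_times_divide mult.commute)
qed

lemma nn_integral_hit_time_step: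
  fixes F :: "enat \<Rightarrow> ennreal"
  assumes "0 < \<mu>" "x \<noteq> \<mu>"
  shows "of_nat (\<mu>^2) * (\<integral>\<^sup>+\<omega>. F (hit_time \<mu> x \<omega>) \<partial>innov_space \<mu>)
         = (\<Sum>u<\<mu>^2. \<integral>\<^sup>+\<omega>. F (eSuc (hit_time \<mu> (chain_step \<mu> x u) \<omega>)) \<partial>innov_space \<mu>)"
proof -
  have "{0..<\<mu>^2} \<noteq> {}"
    using assms(1) by simp
  then show ?thesis
    using nn_integral_stream_space_pmf_of_set[of "{0..<\<mu>^2}" "\<lambda>\<omega>. F (hit_time \<mu> x \<omega>)"] assms(2)
    by (simp add: innov_space_def hit_time_Cons atLeast0LessThan)
qed

section \<open>First-step analysis\<close>

definition hit_mean :: "nat \<Rightarrow> nat \<Rightarrow> ennreal" where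
  "hit_mean \<mu> x = (\<integral>\<^sup>+\<omega>. ennreal_of_enat (hit_time \<mu> x \<omega>) \<partial>innov_space \<mu>)"

definition hit_mean_trunc :: "nat \<Rightarrow> nat \<Rightarrow> nat \<Rightarrow> ennreal" where
  "hit_mean_trunc \<mu> n x = (\<integral>\<^sup>+\<omega>. ennreal_of_enat (min (hit_time \<mu> x \<omega>) (enat n)) \<partial>innov_space \<mu>)"

definition hit_tail :: "nat \<Rightarrow> nat \<Rightarrow> nat \<Rightarrow> ennreal" where
  "hit_tail \<mu> t x = emeasure (innov_space \<mu>) {\<omega>. enat t \<le> hit_time \<mu> x \<omega>}"

lemma hit_tail_nn_integral:
  "hit_tail \<mu> t x = (\<integral>\<^sup>+\<omega>. of_bool (enat t \<le> hit_time \<mu> x \<omega>) \<partial>innov_space \<mu>)"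
proof -
  have "{\<omega> \<in> space (innov_space \<mu>). enat t \<le> hit_time \<mu> x \<omega>} \<in> sets (innov_space \<mu>)"
    by measurable
  then have "{\<omega>. enat t \<le> hit_time \<mu> x \<omega>} \<in> sets (innov_space \<mu>)"
    by (simp add: space_innov_space)
  from nn_integral_indicator[OF this] show ?thesis
    by (simp add: hit_tail_def indicator_def)
qed

lemma hit_mean_top: "hit_mean \<mu> \<mu> = 0"
  by (simp add: hit_mean_def)

lemma hit_mean_trunc_top: "hit_mean_trunc \<mu> n \<mu> = 0"
  by (simp add: hit_mean_trunc_def)

lemma hit_mean_trunc_0: "hit_mean_trunc \<mu> 0 x = 0"
  by (simp add: hit_mean_trunc_def zero_enat_def[symmetric])

lemma hit_tail_0: "hit_tail \<mu> 0 x = 1"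
proof -
  interpret prob_space "innov_space \<mu>" by (rule prob_space_innov_space)
  show ?thesis
    using emeasure_space_1 by (simp add: hit_tail_def space_innov_space zero_enat_def[symmetric])
qed

lemma hit_tail_top: "hit_tail \<mu> (Suc t) \<mu> = 0"
  by (simp add: hit_tail_def enat_0_iff)

lemma hit_mean_step:
  assumes "0 < \<mu>" "x \<noteq> \<mu>"
  shows "of_nat (\<mu>^2) * hit_mean \<mu> x = of_nat (\<mu>^2) + (\<Sum>u<\<mu>^2. hit_mean \<mu> (chain_step \<mu> x u))"
proof -
  interpret prob_space "innov_space \<mu>" by (rule prob_space_innov_space)
  show ?thesis
    using nn_integral_hit_time_step[OF assms, of ennreal_of_enat]
    by (simp add: hit_mean_def nn_integral_add emeasure_space_1 sum.distrib)
qed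

lemma hit_mean_trunc_step:
  assumes "0 < \<mu>" "x \<noteq> \<mu>"
  shows "of_nat (\<mu>^2) * hit_mean_trunc \<mu> (Suc n) x
         = of_nat (\<mu>^2) + (\<Sum>u<\<mu>^2. hit_mean_trunc \<mu> n (chain_step \<mu> x u))"
proof -
  interpret prob_space "innov_space \<mu>" by (rule prob_space_innov_space)
  have "min (eSuc h) (enat (Suc n)) = eSuc (min h (enat n))" for h
    by (cases h) (auto simp: eSuc_enat[symmetric] min_def)
  then show ?thesis
    using nn_integral_hit_time_step[OF assms, of "\<lambda>h. ennreal_of_enat (min h (enat (Suc n)))"]
    by (simp add: hit_mean_trunc_def nn_integral_add emeasure_space_1 sum.distrib)
qed

lemma hit_tail_step:
  assumes "0 < \<mu>" "x \<noteq> \<mu>"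
  shows "of_nat (\<mu>^2) * hit_tail \<mu> (Suc t) x = (\<Sum>u<\<mu>^2. hit_tail \<mu> t (chain_step \<mu> x u))"
proof -
  have "enat (Suc t) \<le> eSuc h \<longleftrightarrow> enat t \<le> h" for h
    by (simp add: eSuc_enat[symmetric])
  then show ?thesis
    using nn_integral_hit_time_step[OF assms, of "\<lambda>h. of_bool (enat (Suc t) \<le> h)"]
    by (simp add: hit_tail_nn_integral)
qed

section \<open>The expected hitting time in closed form\<close>

definition up_count :: "nat \<Rightarrow> nat \<Rightarrow> nat" where
  "up_count \<mu> x = x * (\<mu> - x)"

definition down_count :: "nat \<Rightarrow> nat \<Rightarrow> nat" where
  "down_count \<mu> x = (if 1 < x then x * (\<mu> - x) else 0)"

lemma up_down_count_le: "up_count \<mu> x + down_count \<mu> x \<le> \<mu>^2"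
proof (cases "x \<le> \<mu>")
  case True
  then obtain y where "\<mu> = x + y" using le_Suc_ex by blast
  moreover have "2 * x * y \<le> (x + y)^2" by (simp add: power2_sum)
  ultimately show ?thesis unfolding up_count_def down_count_def by auto
qed (simp add: up_count_def down_count_def)

lemma sum_chain_step:
  fixes f :: "nat \<Rightarrow> 'a::semiring_1"
  assumes "1 \<le> x" "x < \<mu>"
  shows "(\<Sum>u<\<mu>^2. f (chain_step \<mu> x u)) = of_nat (up_count \<mu> x) * f (Suc x)
           + of_nat (down_count \<mu> x) * f (x - 1) + of_nat (\<mu>^2 - up_count \<mu> x - down_count \<mu> x) * f x"
proof -
  let ?a = "up_count \<mu> x" and ?b = "down_count \<mu> x"
  have "(\<Sum>u<\<mu>^2. f (chain_step \<mu> x u)) = (\<Sum>u\<in>{0..<?a}. f (chain_step \<mu> x u))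
      + (\<Sum>u\<in>{?a..<?a + ?b}. f (chain_step \<mu> x u)) + (\<Sum>u\<in>{?a + ?b..<\<mu>^2}. f (chain_step \<mu> x u))"
    using up_down_count_le[of \<mu> x]
    by (simp add: sum.atLeastLessThan_concat atLeast0LessThan[symmetric])
  also have "\<dots> = (\<Sum>u\<in>{0..<?a}. f (Suc x)) + (\<Sum>u\<in>{?a..<?a + ?b}. f (x - 1)) + (\<Sum>u\<in>{?a + ?b..<\<mu>^2}. f x)"
    using assms by (intro arg_cong2[where f = "(+)"] sum.cong)
      (auto simp: chain_step_def up_count_def down_count_def split: if_splits)
  finally show ?thesis by simp
qed

lemma first_step_equation_iff:
  fixes f :: "nat \<Rightarrow> real"
  assumes "1 \<le> x" "x < \<mu>"
  shows "real \<mu>^2 + (\<Sum>u<\<mu>^2. f (chain_step \<mu> x u)) = real \<mu>^2 * f x \<longleftrightarrow>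
         real (up_count \<mu> x) * (f x - f (Suc x)) = real \<mu>^2 + real (down_count \<mu> x) * (f (x - 1) - f x)"
  using up_down_count_le[of \<mu> x] unfolding sum_chain_step[OF assms]
  by (simp add: of_nat_diff algebra_simps) (auto simp: algebra_simps)

text \<open>The expected time to reach \<open>k + 1\<close> from \<open>k\<close>.\<close>

definition climb_time :: "nat \<Rightarrow> nat \<Rightarrow> real" where
  "climb_time \<mu> k = real \<mu> * (harm k + harm (\<mu> - 1) - harm (\<mu> - 1 - k))"

lemma climb_time_step:
  assumes "1 \<le> x" "x < \<mu>"
  shows "real (up_count \<mu> x) * climb_time \<mu> x = real \<mu>^2 + real (down_count \<mu> x) * climb_time \<mu> (x - 1)"
proof -
  have "\<mu> - x = Suc (\<mu> - 1 - x)"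
    using assms by simp
  then have "harm (\<mu> - x) = harm (\<mu> - 1 - x) + 1 / real (\<mu> - x)"
    by (metis harm_Suc inverse_eq_divide)
  moreover have "harm x = harm (x - 1) + 1 / real x"
    using harm_Suc[of "x - 1"] assms by (simp add: inverse_eq_divide)
  moreover have "\<mu> - 1 - (x - 1) = \<mu> - x"
    using assms by simp
  ultimately have "climb_time \<mu> x = climb_time \<mu> (x - 1) + real \<mu> * (1 / real x + 1 / real (\<mu> - x))"
    by (simp add: climb_time_def algebra_simps)
  moreover have "real (up_count \<mu> x) * (real \<mu> * (1 / real x + 1 / real (\<mu> - x))) = real \<mu>^2"
    using assms by (simp add: up_count_def field_simps power2_eq_square)
  moreover have "climb_time \<mu> 0 = 0"
    by (simp add: climb_time_def harm_def)
  ultimately show ?thesis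
    using assms by (cases "x = 1") (auto simp: down_count_def up_count_def algebra_simps)
qed

lemma climb_time_nonneg: "0 \<le> climb_time \<mu> k"
proof -
  have "harm (\<mu> - 1 - k) \<le> (harm (\<mu> - 1) :: real)"
    by (rule harm_mono) simp
  then show ?thesis
    unfolding climb_time_def using harm_nonneg[of k, where 'a = real] by (intro mult_nonneg_nonneg) simp_all
qed

lemma increments_eq_climb_time:
  fixes f :: "nat \<Rightarrow> real"
  assumes step: "\<And>y. 1 \<le> y \<Longrightarrow> y < \<mu> \<Longrightarrow>
      real (up_count \<mu> y) * (f y - f (Suc y)) = real \<mu>^2 + real (down_count \<mu> y) * (f (y - 1) - f y)"
  shows "1 \<le> x \<Longrightarrow> x < \<mu> \<Longrightarrow> f x - f (Suc x) = climb_time \<mu> x"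
proof (induction x)
  case (Suc k)
  have "real (down_count \<mu> (Suc k)) * (f k - f (Suc k)) = real (down_count \<mu> (Suc k)) * climb_time \<mu> k"
    using Suc by (cases "k = 0") (auto simp: down_count_def)
  then have "real (up_count \<mu> (Suc k)) * (f (Suc k) - f (Suc (Suc k)))
      = real (up_count \<mu> (Suc k)) * climb_time \<mu> (Suc k)"
    using step[OF Suc.prems] climb_time_step[OF Suc.prems] by simp
  moreover have "0 < up_count \<mu> (Suc k)"
    using Suc.prems by (simp add: up_count_def)
  ultimately show ?case by simp
qed simp

definition hit_time_formula :: "nat \<Rightarrow> nat \<Rightarrow> real" where
  "hit_time_formula \<mu> x = (\<Sum>k\<in>{x..<\<mu>}. climb_time \<mu> k)"

lemma hit_time_formula_nonneg: "0 \<le> hit_time_formula \<mu> x"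
  unfolding hit_time_formula_def by (intro sum_nonneg climb_time_nonneg)

lemma hit_time_formula_first_step:
  assumes "1 \<le> x" "x < \<mu>"
  shows "real \<mu>^2 + (\<Sum>u<\<mu>^2. hit_time_formula \<mu> (chain_step \<mu> x u)) = real \<mu>^2 * hit_time_formula \<mu> x"
proof -
  have incr: "y < \<mu> \<Longrightarrow> hit_time_formula \<mu> y - hit_time_formula \<mu> (Suc y) = climb_time \<mu> y" for y
    by (simp add: hit_time_formula_def sum.atLeast_Suc_lessThan)
  have "real (down_count \<mu> x) * (hit_time_formula \<mu> (x - 1) - hit_time_formula \<mu> x)
      = real (down_count \<mu> x) * climb_time \<mu> (x - 1)"
    using incr[of "x - 1"] assms by (cases "x = 1") (auto simp: down_count_def)
  moreover have "hit_time_formula \<mu> x - hit_time_formula \<mu> (Suc x) = climb_time \<mu> x"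
    using incr assms(2) .
  ultimately show ?thesis
    unfolding first_step_equation_iff[OF assms] by (simp only: climb_time_step[OF assms])
qed

lemma first_step_solution_eq_hit_time_formula:
  fixes f :: "nat \<Rightarrow> real"
  assumes first_step: "\<And>y. 1 \<le> y \<Longrightarrow> y < \<mu> \<Longrightarrow> real \<mu>^2 + (\<Sum>u<\<mu>^2. f (chain_step \<mu> y u)) = real \<mu>^2 * f y"
    and top: "f \<mu> = 0" and x: "1 \<le> x" "x \<le> \<mu>"
  shows "f x = hit_time_formula \<mu> x"
proof -
  have "hit_time_formula \<mu> x = (\<Sum>k\<in>{x..<\<mu>}. f k - f (Suc k))"
    unfolding hit_time_formula_def using x first_step first_step_equation_iff
    by (intro sum.cong refl increments_eq_climb_time[symmetric]) auto
  also have "\<dots> = f x - f \<mu>"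
    using sum_Suc_diff'[OF x(2), of "\<lambda>k. - f k"] by (simp add: sum_negf)
  finally show ?thesis using top by simp
qed

lemma ennreal_of_nat_mult_le_cancel:
  fixes a b :: ennreal
  assumes "0 < n" "of_nat n * a \<le> of_nat n * b"
  shows "a \<le> b"
  using assms ennreal_mult_le_mult_iff[of "of_nat n" a b] by (simp add: ennreal_of_nat_neq_top)

lemma hit_mean_trunc_le_formula:
  "1 \<le> x \<Longrightarrow> x \<le> \<mu> \<Longrightarrow> hit_mean_trunc \<mu> n x \<le> ennreal (hit_time_formula \<mu> x)"
proof (induction n arbitrary: x)
  case 0
  then show ?case by (simp add: hit_mean_trunc_0)
next
  case (Suc n)
  show ?case
  proof (cases "x = \<mu>")
    case False
    with Suc.prems have x: "1 \<le> x" "x < \<mu>" by simp_all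
    have "of_nat (\<mu>^2) * hit_mean_trunc \<mu> (Suc n) x
        = of_nat (\<mu>^2) + (\<Sum>u<\<mu>^2. hit_mean_trunc \<mu> n (chain_step \<mu> x u))"
      using hit_mean_trunc_step[OF _ False] x by simp
    also have "\<dots> \<le> of_nat (\<mu>^2) + (\<Sum>u<\<mu>^2. ennreal (hit_time_formula \<mu> (chain_step \<mu> x u)))"
      using Suc.IH chain_step_bounds Suc.prems by (intro add_left_mono sum_mono) auto
    also have "\<dots> = ennreal (real \<mu>^2 + (\<Sum>u<\<mu>^2. hit_time_formula \<mu> (chain_step \<mu> x u)))"
      by (simp add: hit_time_formula_nonneg sum_nonneg ennreal_of_nat_eq_real_of_nat)
    also have "\<dots> = of_nat (\<mu>^2) * ennreal (hit_time_formula \<mu> x)"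
      using hit_time_formula_first_step[OF x]
      by (simp add: ennreal_mult'[of "(real \<mu>)^2"] ennreal_of_nat_eq_real_of_nat)
    finally show ?thesis
      by (rule ennreal_of_nat_mult_le_cancel[rotated]) (use x in simp)
  qed (simp add: hit_mean_trunc_top)
qed

lemma SUP_min_enat: "(SUP n. min h (enat n)) = h"
proof (cases h)
  case (enat k)
  then show ?thesis
    by (intro antisym SUP_least) (auto intro: SUP_upper2[of k])
next
  case infinity
  have "infinite (range enat)"
    using finite_imageD[of enat UNIV] by (auto simp: inj_on_def)
  then show ?thesis
    using infinity by (simp add: Sup_enat_def)
qed

lemma hit_mean_SUP_trunc: "hit_mean \<mu> x = (SUP n. hit_mean_trunc \<mu> n x)"
proof -
  have "hit_mean \<mu> x = (\<integral>\<^sup>+\<omega>. (SUP n. ennreal_of_enat (min (hit_time \<mu> x \<omega>) (enat n))) \<partial>innov_space \<mu>)"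
    unfolding hit_mean_def by (intro nn_integral_cong) (metis ennreal_of_enat_Sup SUP_min_enat image_image)
  also have "\<dots> = (SUP n. hit_mean_trunc \<mu> n x)"
    unfolding hit_mean_trunc_def
    by (rule nn_integral_monotone_convergence_SUP) (auto simp: incseq_def le_fun_def min_le_iff_disj)
  finally show ?thesis .
qed

lemma hit_mean_eq_formula:
  assumes "1 \<le> x" "x \<le> \<mu>"
  shows "hit_mean \<mu> x = ennreal (hit_time_formula \<mu> x)"
proof -
  define e where "e y = enn2real (hit_mean \<mu> y)" for y
  have finite: "hit_mean \<mu> y = ennreal (e y)" if "1 \<le> y" "y \<le> \<mu>" for y
  proof -
    have "hit_mean \<mu> y \<le> ennreal (hit_time_formula \<mu> y)"
      unfolding hit_mean_SUP_trunc using hit_mean_trunc_le_formula[OF that] by (rule SUP_least)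
    then have "hit_mean \<mu> y < top"
      using ennreal_less_top order_le_less_trans by blast
    then show ?thesis
      unfolding e_def by simp
  qed
  have "e y = hit_time_formula \<mu> y" if "1 \<le> y" "y \<le> \<mu>" for y
  proof (rule first_step_solution_eq_hit_time_formula[OF _ _ that])
    fix y assume y: "1 \<le> y" "y < \<mu>"
    have "ennreal (real \<mu>^2 * e y) = of_nat (\<mu>^2) + (\<Sum>u<\<mu>^2. hit_mean \<mu> (chain_step \<mu> y u))"
      using hit_mean_step[of \<mu> y] finite[of y] y
      by (simp add: ennreal_mult'[of "(real \<mu>)^2"] ennreal_of_nat_eq_real_of_nat)
    also have "\<dots> = of_nat (\<mu>^2) + (\<Sum>u<\<mu>^2. ennreal (e (chain_step \<mu> y u)))"
      using finite chain_step_bounds y by (intro arg_cong2[where f = "(+)"] sum.cong) auto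
    also have "\<dots> = ennreal (real \<mu>^2 + (\<Sum>u<\<mu>^2. e (chain_step \<mu> y u)))"
      by (simp add: ennreal_of_nat_eq_real_of_nat e_def sum_nonneg)
    finally show "real \<mu>^2 + (\<Sum>u<\<mu>^2. e (chain_step \<mu> y u)) = real \<mu>^2 * e y"
      by (subst (asm) ennreal_inj) (auto simp: e_def intro!: add_nonneg_nonneg sum_nonneg)
  qed (simp add: e_def hit_mean_top)
  then show ?thesis
    using finite assms by simp
qed

section \<open>Estimates of the closed form\<close>

lemma sum_harm_diff_reflect:
  assumes "x \<le> \<mu>"
  shows "(\<Sum>k\<in>{x..<\<mu>}. harm k - harm (\<mu> - 1 - k)) = (\<Sum>i<\<mu> - x. harm (x + i) - harm i :: real)"
proof -
  have shift: "(\<Sum>k\<in>{x..<\<mu>}. f k) = (\<Sum>i<\<mu> - x. f (x + i))" for f :: "nat \<Rightarrow> real"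
    using sum.shift_bounds_nat_ivl[of f 0 x "\<mu> - x"] assms by (simp add: atLeast0LessThan add.commute)
  have "(\<Sum>i<\<mu> - x. harm (\<mu> - 1 - (x + i))) = (\<Sum>i<\<mu> - x. harm (\<mu> - x - Suc i) :: real)"
    by (intro sum.cong refl) (simp add: diff_diff_add)
  also have "\<dots> = (\<Sum>i<\<mu> - x. harm i)"
    by (rule sum.nat_diff_reindex)
  finally show ?thesis
    by (simp add: shift sum_subtractf)
qed

lemma hit_time_formula_eq:
  assumes "x \<le> \<mu>"
  shows "hit_time_formula \<mu> x
         = real \<mu> * (real (\<mu> - x) * harm (\<mu> - 1) + (\<Sum>i<\<mu> - x. harm (x + i) - harm i))"
proof -
  have "hit_time_formula \<mu> x = (\<Sum>k\<in>{x..<\<mu>}. real \<mu> * (harm (\<mu> - 1) + (harm k - harm (\<mu> - 1 - k))))"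
    unfolding hit_time_formula_def climb_time_def by (intro sum.cong refl) (simp add: algebra_simps)
  also have "\<dots> = real \<mu> * (real (\<mu> - x) * harm (\<mu> - 1) + (\<Sum>k\<in>{x..<\<mu>}. harm k - harm (\<mu> - 1 - k)))"
    by (simp add: sum_distrib_left[symmetric] sum.distrib)
  finally show ?thesis
    using sum_harm_diff_reflect[OF assms] by simp
qed

lemma hit_time_formula_lower:
  assumes "x \<le> \<mu>"
  shows "real (\<mu> - x) * real \<mu> * harm (\<mu> - 1) \<le> hit_time_formula \<mu> x"
proof -
  have "0 \<le> (\<Sum>i<\<mu> - x. harm (x + i) - harm i :: real)"
    by (intro sum_nonneg) (simp add: harm_mono)
  then show ?thesis
    unfolding hit_time_formula_eq[OF assms] by (simp add: algebra_simps)
qed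

lemma hit_time_formula_one:
  assumes "1 \<le> \<mu>"
  shows "hit_time_formula \<mu> 1 = real \<mu>^2 * harm (\<mu> - 1)"
proof -
  have "(\<Sum>i<\<mu> - 1. harm (1 + i) - harm i :: real) = harm (\<mu> - 1)"
    using sum_lessThan_telescope[of "harm :: nat \<Rightarrow> real" "\<mu> - 1"] by (simp add: harm_def)
  then show ?thesis
    unfolding hit_time_formula_eq[OF assms] using assms
    by (simp add: of_nat_diff power2_eq_square algebra_simps)
qed

lemma hit_time_formula_antimono: "x \<le> y \<Longrightarrow> hit_time_formula \<mu> y \<le> hit_time_formula \<mu> x"
  unfolding hit_time_formula_def by (intro sum_mono2) (auto intro: climb_time_nonneg)

lemma hit_time_formula_upper:
  "hit_time_formula \<mu> x \<le> real (\<mu> - x) * (2 * real \<mu> * harm (\<mu> - 1))"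
proof -
  have "climb_time \<mu> k \<le> 2 * real \<mu> * harm (\<mu> - 1)" if "k < \<mu>" for k
  proof -
    have "harm k \<le> (harm (\<mu> - 1) :: real)"
      using that by (intro harm_mono) simp
    moreover have "0 \<le> (harm (\<mu> - 1 - k) :: real)"
      by (rule harm_nonneg)
    ultimately have "harm k + harm (\<mu> - 1) - harm (\<mu> - 1 - k) \<le> 2 * (harm (\<mu> - 1) :: real)"
      by simp
    from mult_left_mono[OF this, of "real \<mu>"] show ?thesis
      unfolding climb_time_def by (simp add: algebra_simps)
  qed
  then have "hit_time_formula \<mu> x \<le> (\<Sum>k\<in>{x..<\<mu>}. 2 * real \<mu> * harm (\<mu> - 1))"
    unfolding hit_time_formula_def by (intro sum_mono) simp
  then show ?thesis by simp
qed

lemma harm_double_le: "harm (2 * m) \<le> 2 * (harm m :: real)"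
proof (induction m)
  case (Suc m)
  have "harm (2 * Suc m) = harm (2 * m) + 1 / real (Suc (2 * m)) + 1 / real (Suc (Suc (2 * m)))"
    by (simp add: harm_Suc inverse_eq_divide)
  also have "\<dots> \<le> harm (2 * m) + 1 / real (Suc m) + 1 / real (Suc m)"
    by (intro add_mono divide_left_mono) auto
  finally show ?case
    using Suc.IH by (simp add: harm_Suc inverse_eq_divide)
qed (simp add: harm_def)

lemma harm_pred_le_double_half: "harm (n - 1) \<le> 2 * (harm (n div 2) :: real)"
proof -
  have "harm (n - 1) \<le> (harm (2 * (n div 2)) :: real)"
    by (rule harm_mono) arith
  also have "\<dots> \<le> 2 * harm (n div 2)"
    by (rule harm_double_le)
  finally show ?thesis .
qed

lemma harm_le_ln_double_Suc: "harm m \<le> ln (2 * real m + 1)"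
proof (induction m)
  case (Suc m)
  have "2 * ((2 * real m + 3) - (2 * real m + 1)) / ((2 * real m + 1) + (2 * real m + 3))
        \<le> ln (2 * real m + 3) - ln (2 * real m + 1)"
    by (rule ln_inverse_approx_ge) auto
  moreover have "2 * ((2 * real m + 3) - (2 * real m + 1)) / ((2 * real m + 1) + (2 * real m + 3)) = 1 / real (Suc m)"
    by (simp add: field_simps)
  ultimately show ?case
    using Suc.IH by (simp add: harm_Suc inverse_eq_divide algebra_simps)
qed (simp add: harm_def)

lemma pred_mult_harm_half_le_ln:
  assumes "2 \<le> \<mu>"
  shows "real (\<mu> - 1) * harm (\<mu> div 2) \<le> real \<mu> * ln (real \<mu>)"
proof (cases "even \<mu>")
  case True
  then have "2 * (\<mu> div 2) = \<mu>"
    by (rule even_two_times_div_two)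
  from arg_cong[OF this, of real] have H: "harm (\<mu> div 2) \<le> ln (real \<mu> + 1)"
    using harm_le_ln_double_Suc[of "\<mu> div 2"] by simp
  have "real (\<mu> - 1) * harm (\<mu> div 2) \<le> (real \<mu> - 1) * ln (real \<mu> + 1)"
    using mult_left_mono[OF H, of "real \<mu> - 1"] assms by (simp add: of_nat_diff)
  also have "\<dots> \<le> real \<mu> * ln (real \<mu>)"
  proof -
    have "ln 3 \<le> ln (real \<mu> + 1)"
      using assms by simp
    with ln3_gt_1 have "1 \<le> ln (real \<mu> + 1)"
      by linarith
    moreover have "real \<mu> * (ln (real \<mu> + 1) - ln (real \<mu>)) \<le> 1"
      using ln_diff_le_inverse[of "real \<mu>"] assms by (simp add: field_simps)
    ultimately show ?thesis
      unfolding left_diff_distrib right_diff_distrib by linarith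
  qed
  finally show ?thesis .
next
  case False
  then have "2 * (\<mu> div 2) + 1 = \<mu>"
    by (rule odd_two_times_div_two_succ)
  from arg_cong[OF this, of real] have "harm (\<mu> div 2) \<le> ln (real \<mu>)"
    using harm_le_ln_double_Suc[of "\<mu> div 2"] by (simp add: add.commute)
  moreover have "0 \<le> (harm (\<mu> div 2) :: real)"
    by (rule harm_nonneg)
  ultimately show ?thesis
    by (intro mult_mono) simp_all
qed

lemma hit_time_formula_lower_ln:
  assumes "2 \<le> \<mu>" "x \<le> \<mu>"
  shows "(1/2) * (real \<mu> - real x) * real \<mu> * ln (real \<mu> - 1) \<le> hit_time_formula \<mu> x"
proof -
  have "ln (real \<mu> - 1) \<le> ln (real \<mu>)" "ln (real \<mu>) \<le> harm (\<mu> - 1)" "0 \<le> ln (real \<mu> - 1)"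
    using assms ln_le_harm[of "\<mu> - 1"] by (simp_all add: of_nat_diff)
  then have "(1/2) * ln (real \<mu> - 1) \<le> harm (\<mu> - 1)"
    by linarith
  from mult_left_mono[OF this, of "real (\<mu> - x) * real \<mu>"]
  have "(1/2) * (real (\<mu> - x) * real \<mu> * ln (real \<mu> - 1)) \<le> real (\<mu> - x) * real \<mu> * harm (\<mu> - 1)"
    by (simp add: algebra_simps)
  with hit_time_formula_lower[OF assms(2)] show ?thesis
    using assms(2) by (simp add: of_nat_diff algebra_simps)
qed

lemma hit_time_formula_upper_harm_half:
  assumes "x \<le> \<mu>"
  shows "hit_time_formula \<mu> x \<le> 4 * (real \<mu> - real x) * real \<mu> * harm (\<mu> div 2)"
proof -
  have "hit_time_formula \<mu> x \<le> real (\<mu> - x) * (2 * real \<mu> * harm (\<mu> - 1))"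
    by (rule hit_time_formula_upper)
  also have "\<dots> \<le> real (\<mu> - x) * (2 * real \<mu> * (2 * harm (\<mu> div 2)))"
    using harm_pred_le_double_half[of \<mu>] by (intro mult_left_mono) simp_all
  finally show ?thesis
    using assms by (simp add: of_nat_diff algebra_simps)
qed

lemma harm_half_bound_le_ln:
  assumes "2 \<le> \<mu>" "1 \<le> x" "x \<le> \<mu>"
  shows "4 * (real \<mu> - real x) * real \<mu> * harm (\<mu> div 2) \<le> 4 * (real \<mu>)^2 * ln (real \<mu>)"
proof -
  have "real (\<mu> - x) * harm (\<mu> div 2) \<le> real (\<mu> - 1) * harm (\<mu> div 2)"
    using assms by (intro mult_right_mono) (simp_all add: harm_nonneg)
  also have "\<dots> \<le> real \<mu> * ln (real \<mu>)"
    by (rule pred_mult_harm_half_le_ln[OF assms(1)])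
  finally have "real (\<mu> - x) * harm (\<mu> div 2) \<le> real \<mu> * ln (real \<mu>)" .
  from mult_left_mono[OF this, of "4 * real \<mu>"] show ?thesis
    using assms(3) by (simp add: of_nat_diff algebra_simps power2_eq_square)
qed

section \<open>The tail of the hitting time\<close>

lemma hit_tail_antimono: "t \<le> t' \<Longrightarrow> hit_tail \<mu> t' x \<le> hit_tail \<mu> t x"
  unfolding hit_tail_nn_integral by (intro nn_integral_mono) (auto intro: order_trans[of "enat t" "enat t'"])

lemma hit_tail_add_le:
  assumes c: "\<And>y. 1 \<le> y \<Longrightarrow> y \<le> \<mu> \<Longrightarrow> hit_tail \<mu> s y \<le> c"
  shows "1 \<le> x \<Longrightarrow> x \<le> \<mu> \<Longrightarrow> hit_tail \<mu> (t + s) x \<le> hit_tail \<mu> t x * c"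
proof (induction t arbitrary: x)
  case 0
  then show ?case using c by (simp add: hit_tail_0)
next
  case (Suc t)
  show ?case
  proof (cases "x = \<mu>")
    case False
    with Suc.prems have "0 < \<mu>" by simp
    have "of_nat (\<mu>^2) * hit_tail \<mu> (Suc t + s) x = (\<Sum>u<\<mu>^2. hit_tail \<mu> (t + s) (chain_step \<mu> x u))"
      using hit_tail_step[OF \<open>0 < \<mu>\<close> False, of "t + s"] by simp
    also have "\<dots> \<le> (\<Sum>u<\<mu>^2. hit_tail \<mu> t (chain_step \<mu> x u) * c)"
      using Suc.IH chain_step_bounds Suc.prems by (intro sum_mono) auto
    also have "\<dots> = (\<Sum>u<\<mu>^2. hit_tail \<mu> t (chain_step \<mu> x u)) * c"
      by (simp add: sum_distrib_right)
    also have "\<dots> = of_nat (\<mu>^2) * (hit_tail \<mu> (Suc t) x * c)"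
      using hit_tail_step[OF \<open>0 < \<mu>\<close> False, of t] by (metis mult.assoc)
    finally show ?thesis
      by (rule ennreal_of_nat_mult_le_cancel[rotated]) (use \<open>0 < \<mu>\<close> in simp)
  qed (simp add: hit_tail_top)
qed

lemma hit_tail_mult_le:
  assumes c: "\<And>y. 1 \<le> y \<Longrightarrow> y \<le> \<mu> \<Longrightarrow> hit_tail \<mu> s y \<le> c"
  shows "1 \<le> x \<Longrightarrow> x \<le> \<mu> \<Longrightarrow> hit_tail \<mu> (m * s) x \<le> c ^ m"
proof (induction m)
  case (Suc m)
  have "hit_tail \<mu> (m * s + s) x \<le> hit_tail \<mu> (m * s) x * c"
    by (rule hit_tail_add_le[OF assms Suc.prems])
  also have "\<dots> \<le> c ^ m * c"
    by (rule mult_right_mono[OF Suc.IH[OF Suc.prems]]) simp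
  finally show ?case
    by (simp add: add.commute mult.commute)
qed (simp add: hit_tail_0)

lemma hit_tail_Markov: "of_nat s * hit_tail \<mu> s x \<le> hit_mean \<mu> x"
proof -
  have "of_nat s * hit_tail \<mu> s x = (\<integral>\<^sup>+\<omega>. of_nat s * of_bool (enat s \<le> hit_time \<mu> x \<omega>) \<partial>innov_space \<mu>)"
    unfolding hit_tail_nn_integral by (rule nn_integral_cmult[symmetric]) measurable
  also have "\<dots> \<le> hit_mean \<mu> x"
    unfolding hit_mean_def
    by (intro nn_integral_mono) (auto simp: ennreal_of_enat_le_iff[symmetric] simp del: ennreal_of_enat_le_iff)
  finally show ?thesis .
qed

lemma hit_tail_le_half:
  assumes "2 \<le> \<mu>" "1 \<le> x" "x \<le> \<mu>" and s: "2 * real \<mu>^2 * harm (\<mu> - 1) \<le> real s"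
  shows "hit_tail \<mu> s x \<le> ennreal (1/2)"
proof -
  have "0 < 2 * real \<mu>^2 * harm (\<mu> - 1)"
    using assms(1) by simp
  with s have "0 < s"
    by linarith
  have "of_nat s * hit_tail \<mu> s x \<le> hit_mean \<mu> x"
    by (rule hit_tail_Markov)
  also have "\<dots> = ennreal (hit_time_formula \<mu> x)"
    using hit_mean_eq_formula assms(2,3) .
  also have "\<dots> \<le> ennreal (hit_time_formula \<mu> 1)"
    using hit_time_formula_antimono[OF assms(2)] by (rule ennreal_leI)
  also have "\<dots> \<le> ennreal (real s * (1/2))"
    using hit_time_formula_one[of \<mu>] assms(1) s by (intro ennreal_leI) simp
  also have "\<dots> = ennreal (real s) * ennreal (1/2)"
    by (rule ennreal_mult'') simp
  also have "\<dots> = of_nat s * ennreal (1/2)"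
    by (simp only: ennreal_of_nat_eq_real_of_nat)
  finally show ?thesis
    by (rule ennreal_of_nat_mult_le_cancel[rotated]) fact
qed

lemma real_nat_ceiling_less: "0 \<le> z \<Longrightarrow> real (nat \<lceil>z\<rceil>) < z + 1"
  by linarith

lemma nat_ceiling_mult_le:
  fixes L M H :: real
  assumes "1 \<le> L" "1 \<le> M" "0 \<le> H" "H \<le> 25/36 * (1 + L)"
  shows "real (nat \<lceil>L^2\<rceil>) * real (nat \<lceil>2 * M * H\<rceil>) \<le> 8 * M * L^3"
proof -
  have "1 \<le> L^2"
    using assms(1) by (simp add: one_le_power)
  then have m: "real (nat \<lceil>L^2\<rceil>) \<le> 2 * L^2"
    using real_nat_ceiling_less[of "L^2"] by simp
  have "0 \<le> 2 * M * H"
    using assms by simp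
  have "M * H \<le> 25/36 * M + 25/36 * (M * L)"
    using mult_left_mono[OF assms(4), of M] assms(2) by (simp add: algebra_simps)
  moreover have "M \<le> M * L"
    using mult_left_mono[of 1 L M] assms by simp
  moreover have "real (nat \<lceil>2 * M * H\<rceil>) < 2 * (M * H) + 1"
    using real_nat_ceiling_less[OF \<open>0 \<le> 2 * M * H\<close>] by (simp only: mult.assoc)
  ultimately have s: "real (nat \<lceil>2 * M * H\<rceil>) \<le> 4 * M * L"
    using assms(2) by linarith
  have "real (nat \<lceil>L^2\<rceil>) * real (nat \<lceil>2 * M * H\<rceil>) \<le> (2 * L^2) * (4 * M * L)"
    using assms by (intro mult_mono m s of_nat_0_le_iff) simp
  then show ?thesis
    by (simp add: power2_eq_square power3_eq_cube algebra_simps)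
qed

lemma harm_le_log:
  assumes "1 \<le> \<mu>" "\<mu> \<le> n"
  shows "harm (\<mu> - 1) \<le> 25/36 * (1 + log 2 (real n))"
proof -
  have "harm (\<mu> - 1) \<le> ln (2 * real (\<mu> - 1) + 1)"
    by (rule harm_le_ln_double_Suc)
  also have "\<dots> \<le> ln (2 * real n)"
    using assms by (simp add: of_nat_diff)
  also have "\<dots> = ln 2 * (1 + log 2 (real n))"
    using assms by (simp add: ln_mult log_def algebra_simps)
  also have "\<dots> \<le> 25/36 * (1 + log 2 (real n))"
    using ln2_le_25_over_36 assms by (intro mult_right_mono) simp_all
  finally show ?thesis .
qed

lemma hit_tail_le_pow_half:
  assumes "2 \<le> \<mu>" "1 \<le> x" "x \<le> \<mu>" "2 * real \<mu>^2 * harm (\<mu> - 1) \<le> real s"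
  shows "hit_tail \<mu> (m * s) x \<le> ennreal ((1/2) ^ m)"
proof -
  have "hit_tail \<mu> (m * s) x \<le> ennreal (1/2) ^ m"
    using assms by (intro hit_tail_mult_le hit_tail_le_half) simp_all
  also have "ennreal (1/2) ^ m = ennreal ((1/2) ^ m)"
    by (rule ennreal_power) simp
  finally show ?thesis .
qed

lemma measure_hit_time_ge:
  assumes "0 \<le> thr"
  shows "measure (innov_space \<mu>) {\<omega> \<in> space (innov_space \<mu>). ereal thr \<le> ereal_of_enat (hit_time \<mu> x \<omega>)}
         = enn2real (hit_tail \<mu> (nat \<lceil>thr\<rceil>) x)"
proof -
  have "ereal thr \<le> ereal_of_enat h \<longleftrightarrow> enat (nat \<lceil>thr\<rceil>) \<le> h" for h
    using assms by (cases h) auto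
  then show ?thesis
    by (simp add: measure_def hit_tail_def space_innov_space)
qed

lemma hit_time_tail_bound:
  assumes "2 \<le> \<mu>" "1 \<le> x" "x \<le> \<mu>" "\<mu> \<le> n"
  shows "measure (innov_space \<mu>) {\<omega> \<in> space (innov_space \<mu>).
            ereal (8 * (real \<mu>)^2 * (log 2 (real n))^3) \<le> ereal_of_enat (hit_time \<mu> x \<omega>)}
         \<le> real n powr (- log 2 (real n))"
proof -
  define L where "L = log 2 (real n)"
  define thr where "thr = 8 * (real \<mu>)^2 * L^3"
  define m where "m = nat \<lceil>L^2\<rceil>"
  define s where "s = nat \<lceil>2 * real \<mu>^2 * harm (\<mu> - 1)\<rceil>"
  have L: "1 \<le> L"
    using assms unfolding L_def by simp
  have "real m * real s \<le> thr"
    unfolding m_def s_def thr_def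
    using nat_ceiling_mult_le[OF L] harm_le_log[of \<mu> n] harm_nonneg[of "\<mu> - 1", where 'a = real] assms
    by (simp add: L_def)
  then have "int (m * s) \<le> \<lceil>thr\<rceil>"
    by (metis ceiling_mono ceiling_of_nat of_nat_mult)
  then have "hit_tail \<mu> (nat \<lceil>thr\<rceil>) x \<le> hit_tail \<mu> (m * s) x"
    by (intro hit_tail_antimono) linarith
  also have "\<dots> \<le> ennreal ((1/2) ^ m)"
    using assms by (intro hit_tail_le_pow_half) (simp_all add: s_def real_nat_ceiling_ge)
  finally have tail: "hit_tail \<mu> (nat \<lceil>thr\<rceil>) x \<le> ennreal ((1/2) ^ m)" .
  have "0 \<le> thr"
    using L by (simp add: thr_def)
  then have "measure (innov_space \<mu>) {\<omega> \<in> space (innov_space \<mu>). ereal thr \<le> ereal_of_enat (hit_time \<mu> x \<omega>)}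
      \<le> (1/2) ^ m"
    unfolding measure_hit_time_ge[OF \<open>0 \<le> thr\<close>] by (intro enn2real_leI tail) simp
  also have "(1/2::real) ^ m = 2 powr (- real m)"
    by (simp add: powr_minus powr_realpow power_one_over inverse_eq_divide)
  also have "\<dots> \<le> 2 powr (- (L^2))"
    using real_nat_ceiling_ge[of "L^2"] by (simp add: m_def)
  also have "\<dots> = (2 powr L) powr (- L)"
    by (simp add: powr_powr power2_eq_square)
  also have "2 powr L = real n"
    using assms by (simp add: L_def)
  finally show ?thesis
    by (simp add: thr_def L_def)
qed

theorem lemma7:
  fixes \<mu> x0 :: nat
  assumes "\<mu> \<ge> 2" and "1 \<le> x0" and "x0 \<le> \<mu>"
  shows "ennreal ((1/2) * (real \<mu> - real x0) * real \<mu> * ln (real \<mu> - 1))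
           \<le> (\<integral>\<^sup>+ \<omega>. ennreal_of_enat (hit_time \<mu> x0 \<omega>) \<partial>innov_space \<mu>)
       \<and> (\<integral>\<^sup>+ \<omega>. ennreal_of_enat (hit_time \<mu> x0 \<omega>) \<partial>innov_space \<mu>)
           \<le> ennreal (4 * (real \<mu> - real x0) * real \<mu> * harm (\<mu> div 2))
       \<and> 4 * (real \<mu> - real x0) * real \<mu> * harm (\<mu> div 2) \<le> 4 * (real \<mu>)^2 * ln (real \<mu>)
       \<and> (\<forall>n::nat. 0 < n \<and> \<mu> \<le> n \<longrightarrow>
            measure (innov_space \<mu>)
              {\<omega> \<in> space (innov_space \<mu>).
                 ereal (8 * (real \<mu>)^2 * (log 2 (real n))^3) \<le> ereal_of_enat (hit_time \<mu> x0 \<omega>)}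
            \<le> real n powr (- log 2 (real n)))"
proof -
  have "(\<integral>\<^sup>+ \<omega>. ennreal_of_enat (hit_time \<mu> x0 \<omega>) \<partial>innov_space \<mu>) = ennreal (hit_time_formula \<mu> x0)"
    using hit_mean_eq_formula[OF assms(2,3)] by (simp add: hit_mean_def)
  then show ?thesis
    using hit_time_formula_lower_ln[OF assms(1,3)] hit_time_formula_upper_harm_half[OF assms(3)]
      harm_half_bound_le_ln[OF assms] hit_time_tail_bound[OF assms]
    by (simp add: ennreal_leI)
qed

end
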